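(* Let $X$ be a set of propositional variables, $\Sigma\subseteq\Pi X$ a set of classical models, and $\alpha,\beta$ formulas such that $var(\alpha)\cap var(\beta)=\emptyset$, $var(\beta)\cap R(\Sigma)=\emptyset$, and $\beta$ is not a tautology. If $\Sigma\subseteq M(\alpha\vee\beta)$, then $\Sigma\subseteq M(\alpha)$.
   Context: $\Pi X$ is the set of all assignments $X\to\{\mathrm{TRUE},\mathrm{FALSE}\}$; $M(\phi)$ is the set of models of $\phi$; $var(\phi)$ is the set of variables occurring in $\phi$. For $\Sigma\subseteq\Pi X$, a variable $p\in X$ is irrelevant for $\Sigma$ if changing the value of $p$ in any element of $\Sigma$ yields again an element of $\Sigma$ (i.e. $\Sigma=\Sigma\upharpoonright(X-\{p\})\times\{\mathrm{TRUE},\mathrm{FALSE}\}$); $I(\Sigma)$ is the set of irrelevant variables and $R(\Sigma):=X-I(\Sigma)$ the set of relevant (essential) variables. *)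

theory Defs
  imports Main
begin

text \<open>Propositional formulas over a type 'v of variables; the variable set X is UNIV :: 'v set,
and Pi X is the set of all assignments 'v \<Rightarrow> bool.\<close>

datatype 'v form =
    Var 'v
  | Top
  | Bot
  | Neg "'v form"
  | Conj "'v form" "'v form"
  | Disj "'v form" "'v form"
  | Imp "'v form" "'v form"

fun sat :: "('v \<Rightarrow> bool) \<Rightarrow> 'v form \<Rightarrow> bool" where
  "sat s (Var p) = s p"
| "sat s Top = True"
| "sat s Bot = False"
| "sat s (Neg a) = (\<not> sat s a)"
| "sat s (Conj a b) = (sat s a \<and> sat s b)"
| "sat s (Disj a b) = (sat s a \<or> sat s b)"
| "sat s (Imp a b) = (sat s a \<longrightarrow> sat s b)"

definition models :: "'v form \<Rightarrow> ('v \<Rightarrow> bool) set" ("M") where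
  "M a = {s. sat s a}"

fun var :: "'v form \<Rightarrow> 'v set" where
  "var (Var p) = {p}"
| "var Top = {}"
| "var Bot = {}"
| "var (Neg a) = var a"
| "var (Conj a b) = var a \<union> var b"
| "var (Disj a b) = var a \<union> var b"
| "var (Imp a b) = var a \<union> var b"

definition tautology :: "'v form \<Rightarrow> bool" where
  "tautology a \<longleftrightarrow> (\<forall>s. sat s a)"

definition irrelevant :: "('v \<Rightarrow> bool) set \<Rightarrow> 'v \<Rightarrow> bool" where
  "irrelevant \<Sigma> p \<longleftrightarrow> (\<forall>s\<in>\<Sigma>. s(p := \<not> s p) \<in> \<Sigma>)"

definition irr_vars :: "('v \<Rightarrow> bool) set \<Rightarrow> 'v set" ("I") where
  "I \<Sigma> = {p. irrelevant \<Sigma> p}"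

definition rel_vars :: "('v \<Rightarrow> bool) set \<Rightarrow> 'v set" ("R") where
  "R \<Sigma> = UNIV - I \<Sigma>"

end

theory Submission
  imports Defs
begin

text \<open>Take a model s in \<Sigma> and a countermodel t of \<beta>. Since the variables of \<beta> are
irrelevant for \<Sigma>, overwriting s with t on var \<beta> (finitely many flips) stays in \<Sigma>.
The result falsifies \<beta>, so it satisfies \<alpha>; and it agrees with s on var \<alpha>, so s satisfies \<alpha>.\<close>

lemma sat_cong: "(\<And>p. p \<in> var a \<Longrightarrow> s p = t p) \<Longrightarrow> sat s a = sat t a"
  by (induction a) auto

lemma finite_var: "finite (var a)"
  by (induction a) auto

lemma irrelevant_vars_closed:
  assumes "finite V" "\<And>p. p \<in> V \<Longrightarrow> irrelevant \<Sigma> p"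
    and "s \<in> \<Sigma>" "\<And>p. p \<notin> V \<Longrightarrow> t p = s p"
  shows "t \<in> \<Sigma>"
  using assms
proof (induction V arbitrary: s rule: finite_induct)
  case empty
  then have "t = s" by auto
  with empty show ?case by simp
next
  case (insert x F)
  define s' where "s' = s(x := t x)"
  have "irrelevant \<Sigma> x"
    using insert.prems(1) by simp
  then have "s' \<in> \<Sigma>"
    using insert.prems(2) unfolding s'_def irrelevant_def
    by (cases "s x = t x") (auto simp: fun_upd_idem)
  moreover have "\<And>p. p \<notin> F \<Longrightarrow> t p = s' p"
    using insert.prems(3) insert.hyps(2) unfolding s'_def by auto
  ultimately show "t \<in> \<Sigma>"
    using insert.IH insert.prems(1) by blast
qed

lemma override_on_var_closed:
  assumes "var \<beta> \<inter> R \<Sigma> = {}" "s \<in> \<Sigma>"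
  shows "override_on s t (var \<beta>) \<in> \<Sigma>"
proof (rule irrelevant_vars_closed[OF finite_var _ assms(2)])
  show "irrelevant \<Sigma> p" if "p \<in> var \<beta>" for p
    using assms(1) that unfolding rel_vars_def irr_vars_def by auto
qed simp

theorem fact4p1:
  fixes \<Sigma> :: "('v \<Rightarrow> bool) set" and \<alpha> \<beta> :: "'v form"
  assumes "var \<alpha> \<inter> var \<beta> = {}"
    and "var \<beta> \<inter> R \<Sigma> = {}"
    and "\<not> tautology \<beta>"
    and "\<Sigma> \<subseteq> M (Disj \<alpha> \<beta>)"
  shows "\<Sigma> \<subseteq> M \<alpha>"
proof
  fix s assume "s \<in> \<Sigma>"
  obtain t where t: "\<not> sat t \<beta>"
    using assms(3) unfolding tautology_def by auto
  let ?s' = "override_on s t (var \<beta>)"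
  have "?s' \<in> \<Sigma>"
    using override_on_var_closed[OF assms(2) \<open>s \<in> \<Sigma>\<close>] .
  then have "sat ?s' \<alpha> \<or> sat ?s' \<beta>"
    using assms(4) unfolding models_def by auto
  moreover have "sat ?s' \<beta> = sat t \<beta>"
    by (rule sat_cong) (simp add: override_on_def)
  moreover have "sat ?s' \<alpha> = sat s \<alpha>"
    by (rule sat_cong) (use assms(1) in \<open>auto simp: override_on_def\<close>)
  ultimately show "s \<in> M \<alpha>"
    using t unfolding models_def by auto
qed

end
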